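(* Let $f$ be a $C^1$ diffeomorphism of a compact Riemannian manifold $M$ admitting a dominated splitting $TM=E\oplus_{\prec}F$. Then there is an $f$-invariant set $R\subset M$ with $\mu(R)=1$ for every $f$-invariant probability measure $\mu$ such that for every $x\in R$ and every linear subspace $V_{x}\subset T_{x}M$ with $\dim V_{x}=\dim F$, $$\lambda(x,V_{x})\leq\lambda(x,F(x)).$$
   Context: For $x\in M$ and a linear subspace $V\subset T_xM$, $\lambda(x,V)=\limsup_{n\to+\infty}\frac1n\log|\det Df^n_x|_V|$, where $|\det Df^n_x|_{V}|$ is the absolute determinant of $Df^n_x|_V:V\to Df^n_x(V)$ w.r.t. the Riemannian inner products. Dominated splitting $TM=E\oplus_{\prec}F$: $E,F$ continuous $Df$-invariant subbundles with constants $C>0,\lambda\in(0,1)$ such that $\frac{\|Df^k_x v_E\|}{\|v_E\|}\le C\lambda^k\frac{\|Df^k_x v_F\|}{\|v_F\|}$ for all $k\in\mathbb N$, $x\in M$, nonzero $v_E\in E(x),v_F\in F(x)$. *)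

theory Defs
  imports "HOL-Analysis.Analysis" "HOL-Probability.Probability_Measure"
begin

text \<open>The compact Riemannian manifold M is modelled as a compact embedded C1 submanifold
  of a Euclidean space (type 'a), with the induced Riemannian metric (Nash embedding).\<close>

definition C1_on :: "'a::euclidean_space set \<Rightarrow> ('a \<Rightarrow> 'b::euclidean_space) \<Rightarrow> bool" where
  "C1_on U g \<longleftrightarrow> (\<exists>g'. (\<forall>y\<in>U. (g has_derivative blinfun_apply (g' y)) (at y))
                       \<and> continuous_on U g')"

definition C1_submanifold :: "nat \<Rightarrow> 'a::euclidean_space set \<Rightarrow> bool" where
  "C1_submanifold d M \<longleftrightarrow>
     (\<forall>x\<in>M. \<exists>U (\<phi>::'a\<Rightarrow>'a) \<psi> S. open U \<and> x \<in> U \<and> open (\<phi> ` U) \<and>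
        C1_on U \<phi> \<and> C1_on (\<phi> ` U) \<psi> \<and> (\<forall>y\<in>U. \<psi> (\<phi> y) = y) \<and>
        subspace S \<and> dim S = d \<and> \<phi> ` (M \<inter> U) = \<phi> ` U \<inter> S)"

definition tangent_space :: "'a::euclidean_space set \<Rightarrow> 'a \<Rightarrow> 'a set" where
  "tangent_space M x = {v. \<exists>\<gamma>::real\<Rightarrow>'a. (\<forall>t. \<gamma> t \<in> M) \<and> \<gamma> 0 = x \<and>
                              (\<gamma> has_vector_derivative v) (at 0)}"

fun dfn :: "('a \<Rightarrow> 'a) \<Rightarrow> ('a \<Rightarrow> 'a \<Rightarrow>\<^sub>L 'a) \<Rightarrow> nat \<Rightarrow> 'a \<Rightarrow> 'a \<Rightarrow> 'a::real_normed_vector" where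
  "dfn f Df 0 x = id"
| "dfn f Df (Suc n) x = blinfun_apply (Df ((f ^^ n) x)) \<circ> dfn f Df n x"

definition gram_det :: "nat \<Rightarrow> (nat \<Rightarrow> nat \<Rightarrow> real) \<Rightarrow> real" where
  "gram_det k a = (\<Sum>p | p permutes {..<k}. of_int (sign p) * (\<Prod>i<k. a i (p i)))"

definition orthonormal_basis_of :: "'a::euclidean_space set \<Rightarrow> (nat \<Rightarrow> 'a) \<Rightarrow> bool" where
  "orthonormal_basis_of V b \<longleftrightarrow>
     (\<forall>i<dim V. \<forall>j<dim V. b i \<bullet> b j = (if i = j then 1 else 0)) \<and> span (b ` {..<dim V}) = V"

text \<open>Absolute determinant of L restricted to V, w.r.t. the inner products:
  sqrt of the Gram determinant of the images of an orthonormal basis of V.\<close>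
definition abs_det_on :: "('a::euclidean_space \<Rightarrow> 'a) \<Rightarrow> 'a set \<Rightarrow> real" where
  "abs_det_on L V = (let b = (SOME b. orthonormal_basis_of V b) in
      sqrt (gram_det (dim V) (\<lambda>i j. L (b i) \<bullet> L (b j))))"

definition lyap :: "('a::euclidean_space \<Rightarrow> 'a) \<Rightarrow> ('a \<Rightarrow> 'a \<Rightarrow>\<^sub>L 'a) \<Rightarrow> 'a \<Rightarrow> 'a set \<Rightarrow> ereal" where
  "lyap f Df x V = limsup (\<lambda>n. ereal (ln (abs_det_on (dfn f Df n x) V) / real n))"

definition continuous_subbundle :: "'a::euclidean_space set \<Rightarrow> ('a \<Rightarrow> 'a set) \<Rightarrow> bool" where
  "continuous_subbundle M E \<longleftrightarrow>
     (\<forall>x\<in>M. \<exists>W k (e::nat \<Rightarrow> 'a \<Rightarrow> 'a). open W \<and> x \<in> W \<and>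
        (\<forall>i<k. continuous_on (M \<inter> W) (e i)) \<and>
        (\<forall>y\<in>M \<inter> W. span ((\<lambda>i. e i y) ` {..<k}) = E y \<and> dim (E y) = k))"

definition dominated_splitting ::
  "'a::euclidean_space set \<Rightarrow> ('a \<Rightarrow> 'a) \<Rightarrow> ('a \<Rightarrow> 'a \<Rightarrow>\<^sub>L 'a) \<Rightarrow> ('a \<Rightarrow> 'a set) \<Rightarrow> ('a \<Rightarrow> 'a set) \<Rightarrow> bool" where
  "dominated_splitting M f Df E F \<longleftrightarrow>
     continuous_subbundle M E \<and> continuous_subbundle M F \<and>
     (\<forall>x\<in>M. subspace (E x) \<and> subspace (F x) \<and> E x \<inter> F x = {0} \<and>
        {u + v | u v. u \<in> E x \<and> v \<in> F x} = tangent_space M x \<and>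
        blinfun_apply (Df x) ` E x = E (f x) \<and> blinfun_apply (Df x) ` F x = F (f x)) \<and>
     (\<exists>C l. C > 0 \<and> 0 < l \<and> l < 1 \<and>
        (\<forall>k::nat. \<forall>x\<in>M. \<forall>vE\<in>E x. \<forall>vF\<in>F x. vE \<noteq> 0 \<longrightarrow> vF \<noteq> 0 \<longrightarrow>
          norm (dfn f Df k x vE) / norm vE \<le> C * l ^ k * (norm (dfn f Df k x vF) / norm vF)))"

definition C1_diffeo_on :: "'a::euclidean_space set \<Rightarrow> ('a \<Rightarrow> 'a) \<Rightarrow> ('a \<Rightarrow> 'a \<Rightarrow>\<^sub>L 'a) \<Rightarrow> bool" where
  "C1_diffeo_on M f Df \<longleftrightarrow>
     (\<exists>U. open U \<and> M \<subseteq> U \<and> (\<forall>y\<in>U. (f has_derivative blinfun_apply (Df y)) (at y))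
          \<and> continuous_on U Df) \<and>
     f ` M = M \<and> inj_on f M \<and>
     (\<exists>U' g. open U' \<and> M \<subseteq> U' \<and> C1_on U' g \<and> (\<forall>x\<in>M. g (f x) = x))"

definition invariant_prob :: "'a::euclidean_space set \<Rightarrow> ('a \<Rightarrow> 'a) \<Rightarrow> 'a measure \<Rightarrow> bool" where
  "invariant_prob M f \<mu> \<longleftrightarrow> prob_space \<mu> \<and> sets \<mu> = sets borel \<and> emeasure \<mu> M = 1 \<and>
     (\<forall>A \<in> sets borel. A \<subseteq> M \<longrightarrow> emeasure \<mu> (f -` A \<inter> M) = emeasure \<mu> A)"

end

theory Submission
  imports Defs Jordan_Normal_Form.Determinant
begin

text \<open>Fix x and write A n for Df^n_x. As C l^n \<le> C, domination bounds the expansion of nonzero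
  E-vectors by C times that of nonzero F-vectors, uniformly in n. Write a basis of V as sums
  e + f and expand the volume of its image under A n, using that the volume of a parallelotope
  is subadditive in each edge. Terms whose edges all lie in F are constant multiples of
  abs_det_on (A n) (F x); in every other term an E-edge can be traded, by domination, for an
  F-edge at the cost of a factor independent of n. Hence abs_det_on (A n) V \<le> K *
  abs_det_on (A n) (F x) for all n, the exponential rates compare at every point of M, and
  R = M works.\<close>

definition gram :: "'a::real_inner list \<Rightarrow> real" where
  "gram xs = gram_det (length xs) (\<lambda>i j. inner (xs!i) (xs!j))"

definition parvol :: "'a::real_inner list \<Rightarrow> real" where
  "parvol xs = sqrt (gram xs)"

lemma gram_det_eq_det: "gram_det k a = Determinant.det (Matrix.mat k k (\<lambda>(i,j). a i j))"
  by (subst det_def'[of _ k]) (auto simp: gram_det_def atLeast0LessThan intro!: sum.cong prod.cong)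

lemma gram_det_cong:
  assumes "\<And>i j. i < k \<Longrightarrow> j < k \<Longrightarrow> a i j = b i j"
  shows "gram_det k a = gram_det k b"
proof -
  have "Matrix.mat k k (\<lambda>(i,j). a i j) = Matrix.mat k k (\<lambda>(i,j). b i j)"
    using assms by (auto intro!: eq_matI)
  then show ?thesis by (simp add: gram_det_eq_det)
qed

lemma gram_det_one: "gram_det k (\<lambda>i j. if i = j then 1 else 0) = 1"
proof -
  have "Matrix.mat k k (\<lambda>(i,j). if i = j then 1 else 0) = (1\<^sub>m k :: real mat)"
    by (auto intro!: eq_matI)
  then show ?thesis by (simp add: gram_det_eq_det)
qed

lemma gram_det_last_row:
  assumes "\<forall>j<k. a k j = 0"
  shows "gram_det (Suc k) a = a k k * gram_det k a"
proof -
  let ?t = "\<lambda>p. of_int (sign p) * (\<Prod>i<Suc k. a i (p i)) :: real"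
  have sub: "{p. p permutes {..<k}} \<subseteq> {p. p permutes {..<Suc k}}"
    using permutes_subset by fastforce
  have zero: "?t p = 0" if "p \<in> {p. p permutes {..<Suc k}} - {p. p permutes {..<k}}" for p
  proof -
    from that have p: "p permutes {..<Suc k}" and np: "\<not> p permutes {..<k}" by auto
    have "p k \<noteq> k"
    proof
      assume "p k = k"
      then have "p permutes {..<k}" using p by (intro permutes_superset[OF p]) auto
      with np show False by simp
    qed
    moreover have "p k < Suc k" using permutes_in_image[OF p] by simp
    ultimately have "a k (p k) = 0" using assms by simp
    then show ?thesis by (simp add: prod_zero)
  qed
  have fin: "finite {p. p permutes {..<Suc k}}" by (simp add: finite_permutations)
  have "gram_det (Suc k) a = (\<Sum>p | p permutes {..<k}. ?t p)"
    unfolding gram_det_def using sum.mono_neutral_right[OF fin sub, of ?t] zero by simp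
  also have "\<dots> = (\<Sum>p | p permutes {..<k}. a k k * (of_int (sign p) * (\<Prod>i<k. a i (p i))))"
  proof (rule sum.cong)
    fix p assume "p \<in> {p. p permutes {..<k}}"
    then have "p k = k" by (auto intro: permutes_not_in)
    then show "?t p = a k k * (of_int (sign p) * (\<Prod>i<k. a i (p i)))" by simp
  qed simp
  also have "\<dots> = a k k * gram_det k a" unfolding gram_det_def by (simp add: sum_distrib_left)
  finally show ?thesis .
qed

lemma gram_det_permutation_square:
  assumes p: "p permutes {..<k}"
  shows "(gram_det k (\<lambda>a i. if a = p i then 1 else 0))\<^sup>2 = 1"
proof -
  have p': "p permutes {0..<k}" using p by (simp add: atLeast0LessThan)
  have "Matrix.mat k k (\<lambda>(a,i). if a = p i then 1 else 0)
      = transpose_mat (Matrix.mat k k (\<lambda>(i,j). (1\<^sub>m k :: real mat) $$ (p i, j)))"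
    by (intro eq_matI) (use permutes_in_image[OF p] in auto)
  then have "gram_det k (\<lambda>a i. if a = p i then 1 else 0) = of_int (sign p)"
    using det_permute_rows[OF one_carrier_mat p'] by (simp add: gram_det_eq_det det_transpose[of _ k])
  then show ?thesis by (simp add: power2_eq_square flip: of_int_mult)
qed

lemma gram_transform:
  fixes xs ys :: "'a::real_inner list"
  assumes len: "length xs = k" "length ys = k"
    and ys: "\<And>i. i < k \<Longrightarrow> ys!i = (\<Sum>a<k. U a i *\<^sub>R xs!a)"
  shows "gram ys = (gram_det k U)\<^sup>2 * gram xs"
proof -
  define Um where "Um = Matrix.mat k k (\<lambda>(a,i). U a i)"
  define G where "G = Matrix.mat k k (\<lambda>(a,b). inner (xs!a) (xs!b))"
  define G' where "G' = Matrix.mat k k (\<lambda>(a,b). inner (ys!a) (ys!b))"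
  have Um: "Um \<in> carrier_mat k k" and G: "G \<in> carrier_mat k k" unfolding Um_def G_def by auto
  have G'_eq: "G' = transpose_mat Um * G * Um"
  proof (rule eq_matI)
    fix i j assume "i < dim_row (transpose_mat Um * G * Um)" "j < dim_col (transpose_mat Um * G * Um)"
    then have i: "i < k" and j: "j < k" using Um G by auto
    have "(transpose_mat Um * G * Um) $$ (i,j) = (\<Sum>b<k. (\<Sum>a<k. U a i * (inner (xs!a) (xs!b))) * U b j)"
      using i j Um G by (simp add: scalar_prod_def Um_def G_def atLeast0LessThan)
    also have "\<dots> = inner (\<Sum>a<k. U a i *\<^sub>R xs!a) (\<Sum>b<k. U b j *\<^sub>R xs!b)"
      by (simp add: inner_sum_left inner_sum_right sum_distrib_left sum_distrib_right mult_ac)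
    also have "\<dots> = G' $$ (i,j)" using i j by (simp add: G'_def ys)
    finally show "G' $$ (i, j) = (transpose_mat Um * G * Um) $$ (i, j)" by simp
  qed (auto simp: G'_def Um_def G_def)
  have "gram ys = Determinant.det G'" unfolding gram_def gram_det_eq_det G'_def using len by simp
  also have "\<dots> = Determinant.det (transpose_mat Um) * Determinant.det G * Determinant.det Um"
    unfolding G'_eq using Um G by (simp add: det_mult[of _ k])
  also have "\<dots> = (gram_det k U)\<^sup>2 * gram xs"
    unfolding det_transpose[OF Um] using Um
    by (simp add: gram_det_eq_det gram_def len Um_def G_def power2_eq_square)
  finally show ?thesis .
qed

lemma gram_mset:
  assumes "mset xs = mset ys"
  shows "gram xs = gram ys"
proof -
  obtain p where p: "p permutes {..<length ys}" "permute_list p ys = xs"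
    using mset_eq_permutation[OF assms] by blast
  have "gram xs = (gram_det (length ys) (\<lambda>a i. if a = p i then 1 else 0))\<^sup>2 * gram ys"
  proof (rule gram_transform)
    fix i assume i: "i < length ys"
    have "(\<Sum>a<length ys. (if a = p i then 1 else 0) *\<^sub>R ys!a)
        = (\<Sum>a<length ys. if a = p i then ys!a else 0)"
      by (rule sum.cong) auto
    also have "\<dots> = ys ! p i" using permutes_in_image[OF p(1)] i by (simp add: sum.delta)
    finally show "xs!i = (\<Sum>a<length ys. (if a = p i then 1 else 0) *\<^sub>R ys!a)"
      using i by (simp add: p(2)[symmetric] permute_list_nth[OF p(1)])
  qed (use p in auto)
  then show ?thesis using gram_det_permutation_square[OF p(1)] by simp
qed

lemma span_set_nth_sum:
  assumes "p \<in> span (set xs)"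
  shows "\<exists>c. p = (\<Sum>a<length xs. c a *\<^sub>R xs!a)"
proof -
  let ?T = "{q. \<exists>c. q = (\<Sum>a<length xs. c a *\<^sub>R xs!a)}"
  have "set xs \<subseteq> ?T"
  proof
    fix x assume "x \<in> set xs"
    then obtain i where i: "i < length xs" "x = xs!i" by (auto simp: in_set_conv_nth)
    have "(\<Sum>a<length xs. (if a = i then 1 else 0) *\<^sub>R xs!a)
        = (\<Sum>a<length xs. if a = i then xs!a else 0)"
      by (rule sum.cong) auto
    then have "x = (\<Sum>a<length xs. (if a = i then 1 else 0) *\<^sub>R xs!a)"
      using i by simp
    then show "x \<in> ?T" by (intro CollectI exI[of _ "\<lambda>a. if a = i then 1 else 0"])
  qed
  moreover have "subspace ?T"
    unfolding subspace_def
  proof (intro conjI ballI allI)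
    show "0 \<in> ?T" by (rule CollectI, rule exI[of _ "\<lambda>_. 0"]) simp
    fix x y assume "x \<in> ?T" "y \<in> ?T"
    then obtain c d where "x = (\<Sum>a<length xs. c a *\<^sub>R xs!a)" "y = (\<Sum>a<length xs. d a *\<^sub>R xs!a)"
      by blast
    then have "x + y = (\<Sum>a<length xs. (c a + d a) *\<^sub>R xs!a)"
      by (simp add: sum.distrib scaleR_add_left)
    then show "x + y \<in> ?T" by (intro CollectI exI[of _ "\<lambda>a. c a + d a"])
  next
    fix r x assume "x \<in> ?T"
    then obtain c where "x = (\<Sum>a<length xs. c a *\<^sub>R xs!a)" by blast
    then have "r *\<^sub>R x = (\<Sum>a<length xs. (r * c a) *\<^sub>R xs!a)" by (simp add: scaleR_sum_right)
    then show "r *\<^sub>R x \<in> ?T" by (intro CollectI exI[of _ "\<lambda>a. r * c a"])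
  qed
  ultimately have "span (set xs) \<subseteq> ?T" by (rule span_minimal)
  with assms show ?thesis by blast
qed

lemma gram_snoc_orthogonal:
  assumes "\<And>x. x \<in> set xs \<Longrightarrow> inner z x = 0"
  shows "gram (xs @ [z]) = inner z z * gram xs"
proof -
  let ?k = "length xs"
  have "gram (xs @ [z]) = inner z z * gram_det ?k (\<lambda>i j. inner ((xs@[z])!i) ((xs@[z])!j))"
    unfolding gram_def using gram_det_last_row[of ?k] assms by (simp add: nth_append)
  also have "gram_det ?k (\<lambda>i j. inner ((xs@[z])!i) ((xs@[z])!j)) = gram xs"
    unfolding gram_def by (rule gram_det_cong) (auto simp: nth_append)
  finally show ?thesis .
qed

lemma gram_snoc:
  fixes xs :: "'a::euclidean_space list"
  shows "gram (xs @ [y]) = (infdist y (span (set xs)))\<^sup>2 * gram xs"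
proof -
  obtain p z where p: "p \<in> span (set xs)"
    and z: "\<And>w. w \<in> span (set xs) \<Longrightarrow> real_inner_class.orthogonal z w" and y: "y = p + z"
    using orthogonal_subspace_decomp_exists by blast
  obtain c where c: "p = (\<Sum>a<length xs. c a *\<^sub>R xs!a)" using span_set_nth_sum[OF p] by blast
  let ?k = "length xs"
  define U where "U = (\<lambda>a i. if i < ?k then (if a = i then 1 else 0) else (if a < ?k then c a else (1::real)))"
  have "gram (xs @ [y]) = (gram_det (Suc ?k) U)\<^sup>2 * gram (xs @ [z])"
  proof (rule gram_transform)
    fix i assume i: "i < Suc ?k"
    show "(xs @ [y]) ! i = (\<Sum>a<Suc ?k. U a i *\<^sub>R (xs @ [z]) ! a)"
    proof (cases "i < ?k")
      case True
      have "(\<Sum>a<Suc ?k. U a i *\<^sub>R (xs@[z])!a) = (\<Sum>a<Suc ?k. if a = i then (xs@[z])!a else 0)"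
        by (rule sum.cong) (auto simp: U_def True)
      then show ?thesis using True by (simp add: nth_append)
    next
      case False
      then have "i = ?k" using i by simp
      then show ?thesis by (simp add: U_def nth_append y c)
    qed
  qed simp_all
  moreover have "gram_det (Suc ?k) U = 1"
  proof -
    have "gram_det ?k U = 1"
      by (subst gram_det_one[symmetric, of ?k], rule gram_det_cong) (simp add: U_def)
    then show ?thesis by (subst gram_det_last_row) (simp_all add: U_def)
  qed
  moreover have "gram (xs @ [z]) = inner z z * gram xs"
    using z by (intro gram_snoc_orthogonal) (simp add: real_inner_class.orthogonal_def span_base)
  moreover have "infdist y (span (set xs)) = norm z"
  proof (rule antisym)
    show "infdist y (span (set xs)) \<le> norm z"
      using infdist_le[OF p, of y] by (simp add: y dist_norm)
    obtain q where q: "q \<in> span (set xs)" "infdist y (span (set xs)) = dist y q"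
      using infdist_attains_inf[of "span (set xs)" y] by (metis closed_span empty_iff span_zero)
    have "real_inner_class.orthogonal z (p - q)" using z p q(1) by (simp add: span_diff)
    then have "(norm z)\<^sup>2 \<le> (norm (z + (p - q)))\<^sup>2" by (simp add: norm_add_Pythagorean)
    then have "norm z \<le> norm (z + (p - q))" by (simp add: power_mono_iff)
    also have "z + (p - q) = y - q" by (simp add: y)
    finally show "norm z \<le> infdist y (span (set xs))" using q(2) by (simp add: dist_norm)
  qed
  ultimately show ?thesis by (simp add: power2_norm_eq_inner)
qed

lemma gram_Nil: "gram [] = 1"
  by (simp add: gram_def gram_det_def)

lemma gram_nonneg: "gram (xs :: 'a::euclidean_space list) \<ge> 0"
  by (induction xs rule: rev_induct) (simp_all add: gram_Nil gram_snoc)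

lemma parvol_nonneg: "parvol (xs :: 'a::euclidean_space list) \<ge> 0"
  by (simp add: parvol_def gram_nonneg)

lemma parvol_snoc:
  fixes xs :: "'a::euclidean_space list"
  shows "parvol (xs @ [y]) = infdist y (span (set xs)) * parvol xs"
  by (simp add: parvol_def gram_snoc real_sqrt_mult infdist_nonneg)

lemma parvol_mset:
  fixes xs :: "'a::euclidean_space list"
  assumes "mset xs = mset ys"
  shows "parvol xs = parvol ys"
  unfolding parvol_def using gram_mset[OF assms] by simp

lemma infdist_span_pos_iff:
  fixes y :: "'a::euclidean_space"
  shows "infdist y (span S) > 0 \<longleftrightarrow> y \<notin> span S"
proof -
  have "y \<in> span S \<longleftrightarrow> infdist y (span S) = 0"
    by (rule in_closed_iff_infdist_zero) (auto intro: span_zero)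
  then show ?thesis using infdist_nonneg[of y "span S"] by linarith
qed

lemma parvol_pos_iff:
  fixes xs :: "'a::euclidean_space list"
  shows "parvol xs > 0 \<longleftrightarrow> distinct xs \<and> independent (set xs)"
proof (induction xs rule: rev_induct)
  case Nil
  then show ?case by (simp add: parvol_def gram_Nil independent_empty)
next
  case (snoc y xs)
  have "parvol (xs @ [y]) > 0 \<longleftrightarrow> infdist y (span (set xs)) > 0 \<and> parvol xs > 0"
    unfolding parvol_snoc using infdist_nonneg[of y "span (set xs)"] parvol_nonneg[of xs]
    by (metis mult_pos_pos mult_zero_left mult_zero_right order_less_irrefl order_le_less)
  also have "\<dots> \<longleftrightarrow> y \<notin> span (set xs) \<and> distinct xs \<and> independent (set xs)"
    using infdist_span_pos_iff[of y "set xs"] snoc.IH by blast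
  also have "\<dots> \<longleftrightarrow> distinct (xs @ [y]) \<and> independent (set (xs @ [y]))"
    using independent_insert[of y "set xs"] span_base[of y "set xs"] by auto
  finally show ?case .
qed

lemma infdist_subspace_add_le:
  fixes S :: "'a::euclidean_space set"
  assumes "subspace S"
  shows "infdist (x + y) S \<le> infdist x S + infdist y S"
proof -
  have ne: "S \<noteq> {}" and cl: "closed S" using assms by (auto intro: subspace_0 closed_subspace)
  obtain p where p: "p \<in> S" "infdist x S = dist x p" using infdist_attains_inf[OF cl ne] by metis
  obtain q where q: "q \<in> S" "infdist y S = dist y q" using infdist_attains_inf[OF cl ne] by metis
  have "p + q \<in> S" using assms p q by (simp add: subspace_add)
  then have "infdist (x + y) S \<le> dist (x + y) (p + q)" by (rule infdist_le)
  also have "\<dots> \<le> dist x p + dist y q"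
    by (simp add: dist_norm) (metis add_diff_add norm_triangle_ineq)
  finally show ?thesis using p q by simp
qed

lemma parvol_snoc_add_le:
  fixes xs :: "'a::euclidean_space list"
  shows "parvol (xs @ [x + y]) \<le> parvol (xs @ [x]) + parvol (xs @ [y])"
  unfolding parvol_snoc distrib_right[symmetric]
  by (rule mult_right_mono[OF infdist_subspace_add_le[OF subspace_span] parvol_nonneg])

lemma parvol_snoc_le_norm:
  fixes xs :: "'a::euclidean_space list"
  shows "parvol (xs @ [y]) \<le> norm y * parvol xs"
proof -
  have "infdist y (span (set xs)) \<le> dist y 0" by (rule infdist_le) (rule span_zero)
  then show ?thesis unfolding parvol_snoc by (intro mult_right_mono parvol_nonneg) simp
qed

lemma orthonormal_basis_of_exists:
  fixes V :: "'a::euclidean_space set"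
  assumes "subspace V"
  shows "\<exists>b. orthonormal_basis_of V b"
proof -
  obtain B where B: "B \<subseteq> V" "pairwise real_inner_class.orthogonal B" "\<And>x. x \<in> B \<Longrightarrow> norm x = 1"
    "independent B" "card B = dim V" "span B = V"
    using orthonormal_basis_subspace[OF assms] by metis
  have "finite B" using B(4) by (metis eucl.indep_card_eq_dim_span)
  then obtain h where h: "bij_betw h {..<dim V} B"
    using ex_bij_betw_nat_finite[of B] B(5) by (auto simp: atLeast0LessThan)
  have "orthonormal_basis_of V h"
    unfolding orthonormal_basis_of_def
  proof (intro conjI allI impI)
    fix i j assume i: "i < dim V" and j: "j < dim V"
    have hi: "h i \<in> B" and hj: "h j \<in> B" using h i j by (auto simp: bij_betw_def)
    show "inner (h i) (h j) = (if i = j then 1 else 0)"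
    proof (cases "i = j")
      case True
      then show ?thesis using B(3)[OF hi] by (simp add: norm_eq_1)
    next
      case False
      then have "h i \<noteq> h j" using h i j by (auto simp: bij_betw_def inj_on_def)
      then show ?thesis using B(2) hi hj False
        by (auto simp: pairwise_def real_inner_class.orthogonal_def)
    qed
  next
    show "span (h ` {..<dim V}) = V" using h B(6) by (simp add: bij_betw_def)
  qed
  then show ?thesis by blast
qed

lemma orthonormal_basis_of_in: "orthonormal_basis_of V b \<Longrightarrow> i < dim V \<Longrightarrow> b i \<in> V"
  unfolding orthonormal_basis_of_def by (metis lessThan_iff image_eqI span_base)

lemma gram_orthonormal_basis_of:
  assumes "orthonormal_basis_of V b" shows "gram (map b [0..<dim V]) = 1"
proof -
  have "gram (map b [0..<dim V]) = gram_det (dim V) (\<lambda>i j. if i = j then 1 else 0)"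
    unfolding gram_def
    by (simp, rule gram_det_cong) (use assms in \<open>auto simp: orthonormal_basis_of_def\<close>)
  then show ?thesis by (simp add: gram_det_one)
qed

lemma orthonormal_basis_of_expansion:
  fixes V :: "'a::euclidean_space set"
  assumes ob: "orthonormal_basis_of V b" and x: "x \<in> V"
  shows "x = (\<Sum>a<dim V. inner x (b a) *\<^sub>R b a)"
proof -
  let ?d = "x - (\<Sum>a<dim V. inner x (b a) *\<^sub>R b a)"
  have sp: "span (b ` {..<dim V}) = V" using ob by (simp add: orthonormal_basis_of_def)
  have orth: "inner ?d (b j) = 0" if j: "j < dim V" for j
  proof -
    have "(\<Sum>a<dim V. inner x (b a) * inner (b a) (b j)) = (\<Sum>a<dim V. if a = j then inner x (b j) else 0)"
      using ob j by (intro sum.cong) (auto simp: orthonormal_basis_of_def)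
    then show ?thesis using j by (simp add: inner_diff_left inner_sum_left)
  qed
  have sV: "subspace V" using sp subspace_span by metis
  have "(\<Sum>a<dim V. inner x (b a) *\<^sub>R b a) \<in> V"
    using orthonormal_basis_of_in[OF ob] by (intro subspace_sum[OF sV] subspace_scale[OF sV]) auto
  then have dV: "?d \<in> span (b ` {..<dim V})"
    unfolding sp using x sV by (simp add: subspace_diff)
  have "real_inner_class.orthogonal ?d ?d"
    by (rule orthogonal_to_span[OF dV]) (use orth in \<open>auto simp: real_inner_class.orthogonal_def\<close>)
  then show ?thesis by (simp add: real_inner_class.orthogonal_def)
qed

lemma abs_det_on_eq_parvol:
  "abs_det_on L V = parvol (map (L \<circ> (SOME b. orthonormal_basis_of V b)) [0..<dim V])"
proof -
  define b where "b = (SOME b. orthonormal_basis_of V b)"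
  have "gram_det (dim V) (\<lambda>i j. inner (L (b i)) (L (b j))) = gram (map (L \<circ> b) [0..<dim V])"
    unfolding gram_def by (simp, rule gram_det_cong) simp
  then show ?thesis unfolding abs_det_on_def Let_def parvol_def b_def[symmetric] by simp
qed

text \<open>Any list of dim F vectors of F is the image of an orthonormal basis under a linear
  change of coordinates U, so both sides pick up the same factor |det U|.\<close>

lemma parvol_map_eq_abs_det_on:
  fixes F :: "'a::euclidean_space set"
  assumes sF: "subspace F" and lin: "linear L" and fs: "set fs \<subseteq> F" and len: "length fs = dim F"
  shows "parvol (map L fs) = parvol fs * abs_det_on L F"
proof -
  define b where "b = (SOME b. orthonormal_basis_of F b)"
  have ob: "orthonormal_basis_of F b"
    unfolding b_def using orthonormal_basis_of_exists[OF sF] by (rule someI_ex)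
  define k where "k = dim F"
  define U where "U = (\<lambda>a i. inner (fs!i) (b a))"
  have exp: "fs!i = (\<Sum>a<k. U a i *\<^sub>R b a)" if "i < k" for i
    unfolding U_def k_def by (rule orthonormal_basis_of_expansion[OF ob]) (use fs len that k_def in auto)
  have gram_fs: "gram fs = (gram_det k U)\<^sup>2"
    using gram_transform[of "map b [0..<k]" k fs U] gram_orthonormal_basis_of[OF ob] len exp
    by (simp add: k_def)
  have "gram (map L fs) = (gram_det k U)\<^sup>2 * gram (map (L \<circ> b) [0..<k])"
  proof (rule gram_transform)
    fix i assume i: "i < k"
    have "L (fs!i) = (\<Sum>a<k. U a i *\<^sub>R L (b a))"
      by (subst exp[OF i]) (simp add: linear_sum[OF lin] linear_scale[OF lin])
    then show "map L fs ! i = (\<Sum>a<k. U a i *\<^sub>R map (L \<circ> b) [0..<k] ! a)"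
      using i len k_def by simp
  qed (use len k_def in auto)
  then show ?thesis
    unfolding parvol_def abs_det_on_eq_parvol gram_fs b_def[symmetric] k_def[symmetric]
    by (simp add: real_sqrt_mult)
qed

lemma abs_det_on_pos:
  fixes V :: "'a::euclidean_space set"
  assumes sV: "subspace V" and lin: "linear L" and inj: "inj_on L V"
  shows "abs_det_on L V > 0"
proof -
  define b where "b = (SOME b. orthonormal_basis_of V b)"
  have ob: "orthonormal_basis_of V b"
    unfolding b_def using orthonormal_basis_of_exists[OF sV] by (rule someI_ex)
  let ?bs = "map b [0..<dim V]"
  have "parvol ?bs > 0" using gram_orthonormal_basis_of[OF ob] by (simp add: parvol_def)
  then have d: "distinct ?bs" and i: "independent (set ?bs)" using parvol_pos_iff by blast+
  have sp: "span (set ?bs) = V" using ob by (simp add: orthonormal_basis_of_def atLeast0LessThan)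
  then have bV: "set ?bs \<subseteq> V" using span_base by blast
  have "independent (L ` set ?bs)"
    by (rule linear_independent_injective_image[OF lin i]) (use sp inj in simp)
  moreover have "distinct (map L ?bs)"
    using d inj_on_subset[OF inj bV] by (simp add: distinct_map comp_inj_on)
  ultimately have "parvol (map L ?bs) > 0" using parvol_pos_iff[of "map L ?bs"] by (simp add: image_image)
  then show ?thesis unfolding abs_det_on_eq_parvol b_def[symmetric] by simp
qed

lemma ex_not_in_span_set:
  assumes "length xs < dim S"
  shows "\<exists>g\<in>S. g \<notin> span (set xs)"
proof (rule ccontr)
  assume "\<not> (\<exists>g\<in>S. g \<notin> span (set xs))"
  then have "dim S \<le> card (set xs)" by (intro dim_le_card) auto
  with assms card_length[of xs] show False by linarith
qed

locale uniformly_dominated =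
  fixes A :: "nat \<Rightarrow> 'a::euclidean_space \<Rightarrow> 'a" and E F :: "'a set" and C :: real
  assumes linear_A: "\<And>n. linear (A n)"
    and subspace_E: "subspace E" and subspace_F: "subspace F" and C_pos: "C > 0"
    and dominated: "\<And>n e f. e \<in> E \<Longrightarrow> f \<in> F \<Longrightarrow> e \<noteq> 0 \<Longrightarrow> f \<noteq> 0 \<Longrightarrow>
                      norm (A n e) / norm e \<le> C * (norm (A n f) / norm f)"
begin

text \<open>Domination applied to e and g - w, where A n w is the point of A n ` span fs
  nearest to A n g.\<close>

lemma norm_mult_infdist_span_le:
  assumes "e \<in> E" "e \<noteq> 0" "g \<in> F" "set fs \<subseteq> F" "g \<notin> span (set fs)"
  shows "norm (A n e) * infdist g (span (set fs))
           \<le> C * norm e * infdist (A n g) (span (A n ` set fs))"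
proof -
  let ?S = "span (A n ` set fs)"
  obtain q where q: "q \<in> ?S" "infdist (A n g) ?S = dist (A n g) q"
    using infdist_attains_inf[OF closed_span, of "A n ` set fs" "A n g"] by (metis empty_iff span_zero)
  moreover have "?S = A n ` span (set fs)" by (simp add: linear_span_image[OF linear_A])
  ultimately obtain w where w: "w \<in> span (set fs)" "q = A n w" by auto
  have "span (set fs) \<subseteq> F" using assms(4) subspace_F by (rule span_minimal)
  then have gw: "g - w \<in> F" using assms(3) w(1) subspace_F by (auto intro: subspace_diff)
  have gw0: "g - w \<noteq> 0" using assms(5) w(1) by auto
  have "infdist g (span (set fs)) \<le> norm (g - w)"
    using infdist_le[OF w(1), of g] by (simp add: dist_norm)
  then have "norm (A n e) * infdist g (span (set fs)) \<le> norm (A n e) * norm (g - w)"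
    by (simp add: mult_left_mono)
  also have "\<dots> \<le> C * norm e * norm (A n (g - w))"
    using dominated[OF assms(1) gw assms(2) gw0, of n] assms(2) gw0 by (simp add: field_simps)
  also have "norm (A n (g - w)) = infdist (A n g) ?S"
    using q w by (simp add: linear_diff[OF linear_A] dist_norm)
  finally show ?thesis .
qed

lemma norm_prod_parvol_le_abs_det_on:
  assumes "set fs \<subseteq> F" "set es \<subseteq> E" "length fs + length es = dim F"
  shows "\<exists>K. \<forall>n. prod_list (map (\<lambda>e. norm (A n e)) es) * parvol (map (A n) fs)
                \<le> K * abs_det_on (A n) F"
  using assms
proof (induction es arbitrary: fs)
  case Nil
  then show ?case
    using parvol_map_eq_abs_det_on[OF subspace_F linear_A] by (intro exI[of _ "parvol fs"]) simp
next
  case (Cons e es)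
  show ?case
  proof (cases "e = 0")
    case True
    then show ?thesis using linear_0[OF linear_A] by (intro exI[of _ 0]) simp
  next
    case False
    have "length fs < dim F" using Cons.prems(3) by simp
    then obtain g where gF: "g \<in> F" and gn: "g \<notin> span (set fs)"
      using ex_not_in_span_set by blast
    define d where "d = infdist g (span (set fs))"
    have dpos: "d > 0" unfolding d_def using gn infdist_span_pos_iff by blast
    obtain K where K: "\<And>n. prod_list (map (\<lambda>e. norm (A n e)) es) * parvol (map (A n) (fs @ [g]))
                             \<le> K * abs_det_on (A n) F"
      using Cons.IH[of "fs @ [g]"] Cons.prems gF by auto
    show ?thesis
    proof (intro exI[of _ "C * norm e / d * K"] allI)
      fix n
      let ?P = "prod_list (map (\<lambda>e. norm (A n e)) es)"
      have "d * (prod_list (map (\<lambda>e. norm (A n e)) (e # es)) * parvol (map (A n) fs))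
          = ?P * parvol (map (A n) fs) * (norm (A n e) * d)" by (simp add: mult_ac)
      also have "\<dots> \<le> ?P * parvol (map (A n) fs) * (C * norm e * infdist (A n g) (span (A n ` set fs)))"
        using norm_mult_infdist_span_le[of e g fs n] Cons.prems gF gn False
        by (intro mult_left_mono) (auto simp: d_def intro!: mult_nonneg_nonneg prod_list_nonneg parvol_nonneg)
      also have "\<dots> = C * norm e * (?P * parvol (map (A n) (fs @ [g])))"
        by (simp add: parvol_snoc mult_ac)
      also have "\<dots> \<le> C * norm e * (K * abs_det_on (A n) F)"
        using K[of n] C_pos by (intro mult_left_mono) auto
      finally show "prod_list (map (\<lambda>e. norm (A n e)) (e # es)) * parvol (map (A n) fs)
          \<le> C * norm e / d * K * abs_det_on (A n) F"
        using dpos by (simp add: field_simps)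
    qed
  qed
qed

text \<open>Splitting the first edge w = e + f by subadditivity in one edge moves f to the F-edges
  and e to the E-edges.\<close>

lemma norm_prod_parvol_append_le_abs_det_on:
  assumes "set ws \<subseteq> {e + f |e f. e \<in> E \<and> f \<in> F}" "set fs \<subseteq> F" "set es \<subseteq> E"
    and "length ws + length fs + length es = dim F"
  shows "\<exists>K. \<forall>n. prod_list (map (\<lambda>e. norm (A n e)) es) * parvol (map (A n) (ws @ fs))
                \<le> K * abs_det_on (A n) F"
  using assms
proof (induction ws arbitrary: fs es)
  case Nil
  then show ?case using norm_prod_parvol_le_abs_det_on[of fs es] by simp
next
  case (Cons w ws)
  obtain e f where e: "e \<in> E" and f: "f \<in> F" and w: "w = e + f" using Cons.prems(1) by auto
  obtain K1 where K1: "\<And>n. prod_list (map (\<lambda>e. norm (A n e)) es) * parvol (map (A n) (ws @ fs @ [f]))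
                             \<le> K1 * abs_det_on (A n) F"
    using Cons.IH[of "fs @ [f]" es] Cons.prems f by auto
  obtain K2 where K2: "\<And>n. prod_list (map (\<lambda>e. norm (A n e)) (e # es)) * parvol (map (A n) (ws @ fs))
                             \<le> K2 * abs_det_on (A n) F"
    using Cons.IH[of fs "e # es"] Cons.prems e by auto
  have Pnn: "prod_list (map (\<lambda>e. norm (A n e)) es) \<ge> 0" for n by (rule prod_list_nonneg) auto
  show ?case
  proof (intro exI[of _ "K1 + K2"] allI)
    fix n
    let ?P = "prod_list (map (\<lambda>e. norm (A n e)) es)"
    let ?L = "map (A n) (ws @ fs)"
    have "parvol (map (A n) ((w # ws) @ fs)) = parvol (?L @ [A n f + A n e])"
      by (rule parvol_mset) (simp add: w linear_add[OF linear_A] add.commute)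
    also have "\<dots> \<le> parvol (?L @ [A n f]) + parvol (?L @ [A n e])" by (rule parvol_snoc_add_le)
    also have "\<dots> \<le> parvol (?L @ [A n f]) + norm (A n e) * parvol ?L"
      by (rule add_left_mono[OF parvol_snoc_le_norm])
    finally have "?P * parvol (map (A n) ((w # ws) @ fs))
        \<le> ?P * (parvol (?L @ [A n f]) + norm (A n e) * parvol ?L)"
      using Pnn[of n] by (intro mult_left_mono) auto
    also have "\<dots> = ?P * parvol (map (A n) (ws @ fs @ [f]))
        + prod_list (map (\<lambda>e. norm (A n e)) (e # es)) * parvol ?L"
      by (simp add: algebra_simps)
    also have "\<dots> \<le> (K1 + K2) * abs_det_on (A n) F"
      using add_mono[OF K1[of n] K2[of n]] by (simp add: algebra_simps)
    finally show "?P * parvol (map (A n) ((w # ws) @ fs)) \<le> (K1 + K2) * abs_det_on (A n) F" .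
  qed
qed

lemma abs_det_on_le_const_abs_det_on:
  assumes "subspace V" "V \<subseteq> {e + f |e f. e \<in> E \<and> f \<in> F}" "dim V = dim F"
  shows "\<exists>K. \<forall>n. abs_det_on (A n) V \<le> K * abs_det_on (A n) F"
proof -
  define b where "b = (SOME b. orthonormal_basis_of V b)"
  have ob: "orthonormal_basis_of V b"
    unfolding b_def using orthonormal_basis_of_exists[OF assms(1)] by (rule someI_ex)
  have "set (map b [0..<dim V]) \<subseteq> {e + f |e f. e \<in> E \<and> f \<in> F}"
    using orthonormal_basis_of_in[OF ob] assms(2) by (fastforce simp: subset_iff)
  then obtain K where "\<forall>n. parvol (map (A n) (map b [0..<dim V])) \<le> K * abs_det_on (A n) F"
    using norm_prod_parvol_append_le_abs_det_on[of "map b [0..<dim V]" "[]" "[]"] assms(3) by auto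
  then show ?thesis unfolding abs_det_on_eq_parvol b_def by auto
qed

end

lemma limsup_le_limsup_add_const_over_n:
  fixes a b :: "nat \<Rightarrow> real"
  assumes "\<And>n. n > 0 \<Longrightarrow> a n \<le> b n + c / real n"
  shows "limsup (\<lambda>n. ereal (a n)) \<le> limsup (\<lambda>n. ereal (b n))"
proof -
  have "limsup (\<lambda>n. ereal (a n)) \<le> limsup (\<lambda>n. ereal (c / real n) + ereal (b n))"
  proof (rule Limsup_mono)
    show "\<forall>\<^sub>F n in sequentially. ereal (a n) \<le> ereal (c / real n) + ereal (b n)"
      using eventually_gt_at_top[of 0]
    proof eventually_elim
      case (elim n)
      then have "a n \<le> c / real n + b n" using assms[of n] by simp
      then show ?case by simp
    qed
  qed
  also have "\<dots> = ereal 0 + limsup (\<lambda>n. ereal (b n))"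
    by (rule ereal_limsup_lim_add) (simp_all add: tendsto_ereal lim_const_over_n)
  finally show ?thesis by (simp add: zero_ereal_def[symmetric])
qed

lemma lyap_le_of_abs_det_on_le:
  assumes pos: "\<And>n. abs_det_on (dfn f Df n x) V > 0" "\<And>n. abs_det_on (dfn f Df n x) W > 0"
    and le: "\<And>n. abs_det_on (dfn f Df n x) V \<le> K * abs_det_on (dfn f Df n x) W"
  shows "lyap f Df x V \<le> lyap f Df x W"
  unfolding lyap_def
proof (rule limsup_le_limsup_add_const_over_n)
  fix n :: nat assume n: "n > 0"
  let ?V = "abs_det_on (dfn f Df n x) V" and ?W = "abs_det_on (dfn f Df n x) W"
  have K: "K > 0" using le[of n] pos[of n] by (smt (verit) mult_nonpos_nonneg)
  have "ln ?V \<le> ln (K * ?W)" using le[of n] pos[of n] by simp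
  also have "\<dots> = ln ?W + ln K" using K pos(2)[of n] by (simp add: ln_mult)
  finally show "ln ?V / real n \<le> ln ?W / real n + ln K / real n"
    using n by (simp add: divide_right_mono flip: add_divide_distrib)
qed

text \<open>The C1 extension g of the inverse of f gives, by the chain rule along a curve through y,
  a left inverse g' (f y) of Df y on tangent vectors.\<close>

lemma C1_diffeo_on_tangent_space:
  fixes M :: "'a::euclidean_space set"
  assumes diffeo: "C1_diffeo_on M f Df" and y: "y \<in> M"
  shows "Df y ` tangent_space M y \<subseteq> tangent_space M (f y)"
    and "inj_on (Df y) (tangent_space M y)"
proof -
  obtain U where U: "M \<subseteq> U" "\<forall>z\<in>U. (f has_derivative blinfun_apply (Df z)) (at z)"
    using diffeo by (auto simp: C1_diffeo_on_def)
  obtain U' g g' where U': "M \<subseteq> U'" "\<forall>z\<in>U'. (g has_derivative blinfun_apply (g' z)) (at z)"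
    and gf: "\<forall>x\<in>M. g (f x) = x"
    using diffeo by (auto simp: C1_diffeo_on_def C1_on_def)
  have fM: "f z \<in> M" if "z \<in> M" for z
    using that diffeo by (auto simp: C1_diffeo_on_def)
  have curve: "((f \<circ> \<gamma>) has_vector_derivative Df y w) (at 0) \<and> g' (f y) (Df y w) = w"
    if \<gamma>: "\<forall>t. \<gamma> t \<in> M" "\<gamma> 0 = y" "(\<gamma> has_vector_derivative w) (at 0)" for \<gamma> w
  proof -
    have "(f has_derivative blinfun_apply (Df y)) (at (\<gamma> 0))" using U y \<gamma>(2) by blast
    from has_derivative_compose[OF \<gamma>(3)[unfolded has_vector_derivative_def] this]
    have fd: "((f \<circ> \<gamma>) has_vector_derivative Df y w) (at 0)"
      by (simp add: has_vector_derivative_def blinfun.scaleR_right comp_def)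
    have "(g has_derivative blinfun_apply (g' (f y))) (at ((f \<circ> \<gamma>) 0))"
      using U' fM[OF y] \<gamma>(2) by auto
    from has_derivative_compose[OF fd[unfolded has_vector_derivative_def] this]
    have "((\<lambda>t. g ((f \<circ> \<gamma>) t)) has_vector_derivative g' (f y) (Df y w)) (at 0)"
      by (simp add: has_vector_derivative_def blinfun.scaleR_right)
    moreover have "(\<lambda>t. g ((f \<circ> \<gamma>) t)) = \<gamma>" using gf \<gamma>(1) by (simp add: fun_eq_iff)
    ultimately have "g' (f y) (Df y w) = w"
      using \<gamma>(3) by (metis vector_derivative_unique_at)
    with fd show ?thesis by simp
  qed
  show "Df y ` tangent_space M y \<subseteq> tangent_space M (f y)"
  proof
    fix v assume "v \<in> Df y ` tangent_space M y"
    then obtain w \<gamma> where "v = Df y w" "\<forall>t. \<gamma> t \<in> M" "\<gamma> 0 = y" "(\<gamma> has_vector_derivative w) (at 0)"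
      unfolding tangent_space_def by blast
    with curve fM show "v \<in> tangent_space M (f y)"
      unfolding tangent_space_def by (intro CollectI exI[of _ "f \<circ> \<gamma>"]) auto
  qed
  show "inj_on (Df y) (tangent_space M y)"
    by (rule inj_on_inverseI[of _ "g' (f y)"]) (use curve in \<open>auto simp: tangent_space_def\<close>)
qed

lemma linear_dfn: "linear (dfn f Df n x)"
proof (induction n)
  case (Suc n)
  then show ?case
    using linear_compose[OF Suc bounded_linear.linear[OF blinfun.bounded_linear_right]]
    by (simp add: comp_def)
qed (simp add: linear_id[unfolded id_def])

lemma dfn_tangent_space:
  fixes M :: "'a::euclidean_space set"
  assumes diffeo: "C1_diffeo_on M f Df" and x: "x \<in> M"
  shows "(f ^^ n) x \<in> M \<and> dfn f Df n x ` tangent_space M x \<subseteq> tangent_space M ((f ^^ n) x)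
         \<and> inj_on (dfn f Df n x) (tangent_space M x)"
proof (induction n)
  case 0
  then show ?case using x by simp
next
  case (Suc n)
  let ?y = "(f ^^ n) x"
  have y: "?y \<in> M" using Suc.IH by blast
  have "f ?y \<in> M" using y diffeo by (auto simp: C1_diffeo_on_def)
  moreover have "dfn f Df (Suc n) x ` tangent_space M x \<subseteq> tangent_space M (f ?y)"
    using Suc.IH C1_diffeo_on_tangent_space(1)[OF diffeo y] by (auto simp: image_comp[symmetric])
  moreover have "inj_on (dfn f Df (Suc n) x) (tangent_space M x)"
    unfolding dfn.simps using Suc.IH C1_diffeo_on_tangent_space(2)[OF diffeo y]
    by (blast intro: comp_inj_on inj_on_subset)
  ultimately show ?case by (simp add: comp_def)
qed

lemma dominated_splitting_uniformly_dominated: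
  assumes ds: "dominated_splitting M f Df E F" and x: "x \<in> M"
  shows "\<exists>C. uniformly_dominated (\<lambda>n. dfn f Df n x) (E x) (F x) C"
proof -
  obtain C l where C: "C > 0" "0 < l" "l < 1"
    and dom: "\<forall>k::nat. \<forall>x\<in>M. \<forall>vE\<in>E x. \<forall>vF\<in>F x. vE \<noteq> 0 \<longrightarrow> vF \<noteq> 0 \<longrightarrow>
      norm (dfn f Df k x vE) / norm vE \<le> C * l ^ k * (norm (dfn f Df k x vF) / norm vF)"
    using ds[unfolded dominated_splitting_def, THEN conjunct2, THEN conjunct2, THEN conjunct2] by blast
  have "subspace (E x)" "subspace (F x)"
    using ds[unfolded dominated_splitting_def, THEN conjunct2, THEN conjunct2, THEN conjunct1] x by blast+
  have "uniformly_dominated (\<lambda>n. dfn f Df n x) (E x) (F x) C"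
  proof (rule uniformly_dominated.intro[OF linear_dfn \<open>subspace (E x)\<close> \<open>subspace (F x)\<close> C(1)])
    fix n e v assume "e \<in> E x" "v \<in> F x" "e \<noteq> 0" "v \<noteq> 0"
    then have "norm (dfn f Df n x e) / norm e \<le> C * l ^ n * (norm (dfn f Df n x v) / norm v)"
      using dom x by blast
    also have "\<dots> \<le> C * (norm (dfn f Df n x v) / norm v)"
      using C by (intro mult_right_mono) (auto simp: power_le_one)
    finally show "norm (dfn f Df n x e) / norm e \<le> C * (norm (dfn f Df n x v) / norm v)" .
  qed
  then show ?thesis ..
qed

lemma dominated_splitting_lyap_le:
  fixes M :: "'a::euclidean_space set"
  assumes diffeo: "C1_diffeo_on M f Df" and ds: "dominated_splitting M f Df E F"
    and x: "x \<in> M" and V: "subspace V" "V \<subseteq> tangent_space M x" "dim V = dim (F x)"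
  shows "lyap f Df x V \<le> lyap f Df x (F x)"
proof -
  obtain C where "uniformly_dominated (\<lambda>n. dfn f Df n x) (E x) (F x) C"
    using dominated_splitting_uniformly_dominated[OF ds x] ..
  then interpret uniformly_dominated "\<lambda>n. dfn f Df n x" "E x" "F x" C .
  have split: "{u + v |u v. u \<in> E x \<and> v \<in> F x} = tangent_space M x"
    using ds x by (simp add: dominated_splitting_def)
  obtain K where K: "\<And>n. abs_det_on (dfn f Df n x) V \<le> K * abs_det_on (dfn f Df n x) (F x)"
    using abs_det_on_le_const_abs_det_on[OF V(1) V(2)[folded split] V(3)] by blast
  have FT: "F x \<subseteq> tangent_space M x"
  proof
    fix v assume "v \<in> F x"
    then have "0 + v \<in> {u + v |u v. u \<in> E x \<and> v \<in> F x}" using subspace_0[OF subspace_E] by blast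
    then show "v \<in> tangent_space M x" using split by simp
  qed
  have inj: "inj_on (dfn f Df n x) (tangent_space M x)" for n
    using dfn_tangent_space[OF diffeo x] by blast
  show ?thesis
  proof (rule lyap_le_of_abs_det_on_le[OF _ _ K])
    show "abs_det_on (dfn f Df n x) V > 0" for n
      using abs_det_on_pos[OF V(1) linear_dfn inj_on_subset[OF inj V(2)]] .
    show "abs_det_on (dfn f Df n x) (F x) > 0" for n
      using abs_det_on_pos[OF subspace_F linear_dfn inj_on_subset[OF inj FT]] .
  qed
qed

theorem mainTheorem13:
  fixes M :: "'a::euclidean_space set" and d :: nat
    and f :: "'a \<Rightarrow> 'a" and Df :: "'a \<Rightarrow> 'a \<Rightarrow>\<^sub>L 'a" and E F :: "'a \<Rightarrow> 'a set"
  assumes "compact M" and "C1_submanifold d M"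
    and "C1_diffeo_on M f Df"
    and "dominated_splitting M f Df E F"
  shows "\<exists>R. R \<subseteq> M \<and> R \<in> sets borel \<and> f ` R = R \<and>
           (\<forall>\<mu>. invariant_prob M f \<mu> \<longrightarrow> emeasure \<mu> R = 1) \<and>
           (\<forall>x\<in>R. \<forall>V. subspace V \<and> V \<subseteq> tangent_space M x \<and> dim V = dim (F x) \<longrightarrow>
                lyap f Df x V \<le> lyap f Df x (F x))"
proof (intro exI[of _ M] conjI)
  show "M \<in> sets borel" using assms(1) by (simp add: compact_imp_closed)
  show "f ` M = M" using assms(3) by (simp add: C1_diffeo_on_def)
  show "\<forall>\<mu>. invariant_prob M f \<mu> \<longrightarrow> emeasure \<mu> M = 1" by (simp add: invariant_prob_def)
  show "\<forall>x\<in>M. \<forall>V. subspace V \<and> V \<subseteq> tangent_space M x \<and> dim V = dim (F x) \<longrightarrow>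
          lyap f Df x V \<le> lyap f Df x (F x)"
    using dominated_splitting_lyap_le[OF assms(3,4)] by blast
qed simp

end
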